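(* Consider the discrete-time logical system $x(k+1)=f(x(k),u(k))$ with $f:\mathbb{B}^{n_x}\times\mathbb{B}^{n_u}\to\mathbb{B}^{n_x}$, where $f$ is given by an expression whose leaves are $Px$, $Qu$ (for fixed selection matrices $P,Q$ with $0/1$ entries, products over $\mathrm{GF}(2)$) or constant binary vectors, and whose internal nodes are componentwise XOR, XNOR, NOT, AND, NAND, OR or NOR between subexpressions of equal dimension. Let $\hat{\mathcal{R}}_0$ be a logical zonotope with $\mathcal{X}_0\subseteq\hat{\mathcal{R}}_0$, and let $\mathcal{U}_k\subseteq\mathbb{B}^{n_u}$ be logical zonotopes for $k\ge0$. Define $\hat{\mathcal{R}}_{k+1}=f(\hat{\mathcal{R}}_k,\mathcal{U}_k)$, where the expression of $f$ is evaluated on logical zonotopes by replacing each leaf $Px$ by $\langle Pc,PG\rangle$ for $\hat{\mathcal{R}}_k=\langle c,G\rangle$ (similarly $Qu$ using $\mathcal{U}_k$), each constant $v$ by $\langle v,[\,]\rangle$, and each operation by its logical-zonotope counterpart: XOR by $\langle c_1\oplus c_2,[G_1,G_2]\rangle$; NOT by $\langle c\oplus\mathbf{1},G\rangle$; XNOR by NOT of XOR; AND by $\langle c_\wedge,G_\wedge\rangle$ with $c_\wedge=c_1c_2$, $G_\wedge=[c_1g_{2,1},\dots,c_1g_{2,\gamma_2},c_2g_{1,1},\dots,c_2g_{1,\gamma_1},g_{1,1}g_{2,1},\dots,g_{1,\gamma_1}g_{2,\gamma_2}]$; NAND by NOT of AND; OR of $\mathcal{L}_1,\mathcal{L}_2$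 by NAND of $\neg\mathcal{L}_1,\neg\mathcal{L}_2$; NOR by NOT of OR. Then for every $N\ge0$, $\hat{\mathcal{R}}_N\supseteq\mathcal{R}_N$, the exact reachable set.
   Context: $\mathbb{B}=\{0,1\}$; $\mathbf{1}$ is the all-ones vector; for binary vectors $\oplus$ is componentwise XOR, $\neg$ negation, $\vee$ OR and juxtaposition $ab$ componentwise AND; for $g\in\mathbb{B}^n$, $\beta\in\mathbb{B}$, $g\beta$ is $g$ if $\beta=1$ and $0$ otherwise. A logical zonotope is $\langle c,G\rangle=\{x\in\mathbb{B}^n: x=c\oplus g_1\beta_1\oplus\cdots\oplus g_\gamma\beta_\gamma,\ \beta_i\in\{0,1\}\}$ for $c\in\mathbb{B}^n$, $G=[g_1,\dots,g_\gamma]\in\mathbb{B}^{n\times\gamma}$; in the operations above $\mathcal{L}_i=\langle c_i,G_i\rangle$ with $G_i=[g_{i,1},\dots,g_{i,\gamma_i}]$. The exact reachable set after $N$ steps from initial set $\mathcal{X}_0\subseteq\mathbb{B}^{n_x}$ with inputs $u(k)\in\mathcal{U}_k$ is $\mathcal{R}_N=\{x(N): x(0)\in\mathcal{X}_0,\ u(k)\in\mathcal{U}_k,\ x(k+1)=f(x(k),u(k))\ \forall k\in\{0,\dots,N-1\}\}$, with $\mathcal{R}_0=\mathcal{X}_0$. *)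

theory Defs
  imports Main
begin

text \<open>Binary vectors in B^n are boolean lists of length n; a 0/1 matrix is a list of
rows (each a boolean list). Products are over GF(2).\<close>

type_synonym bvec = "bool list"
type_synonym bmat = "bool list list"

definition vxor :: "bvec \<Rightarrow> bvec \<Rightarrow> bvec" where
  "vxor a b = map2 (\<noteq>) a b"

definition vand :: "bvec \<Rightarrow> bvec \<Rightarrow> bvec" where
  "vand a b = map2 (\<and>) a b"

definition vor :: "bvec \<Rightarrow> bvec \<Rightarrow> bvec" where
  "vor a b = map2 (\<or>) a b"

definition vnot :: "bvec \<Rightarrow> bvec" where
  "vnot a = map Not a"

definition ones :: "nat \<Rightarrow> bvec" where
  "ones n = replicate n True"

definition mat_vec :: "bmat \<Rightarrow> bvec \<Rightarrow> bvec" where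
  "mat_vec P x = map (\<lambda>row. foldl (\<noteq>) False (map2 (\<and>) row x)) P"

definition is_bmat :: "nat \<Rightarrow> bmat \<Rightarrow> bool" where
  "is_bmat ncols P \<longleftrightarrow> (\<forall>row\<in>set P. length row = ncols)"

type_synonym lzono = "bvec \<times> bvec list"

definition lz_set :: "lzono \<Rightarrow> bvec set" where
  "lz_set Z = (case Z of (c, G) \<Rightarrow>
     {foldl (\<lambda>acc (g, b). if b then vxor acc g else acc) c (zip G \<beta>) | \<beta>.
        length \<beta> = length G})"

definition wf_lz :: "nat \<Rightarrow> lzono \<Rightarrow> bool" where
  "wf_lz n Z \<longleftrightarrow> length (fst Z) = n \<and> (\<forall>g\<in>set (snd Z). length g = n)"

datatype bexpr =
    LeafX bmat
  | LeafU bmat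
  | Const bvec
  | XOR bexpr bexpr
  | XNOR bexpr bexpr
  | NOT bexpr
  | AND bexpr bexpr
  | NAND bexpr bexpr
  | OR bexpr bexpr
  | NOR bexpr bexpr

fun wf_expr :: "nat \<Rightarrow> nat \<Rightarrow> bexpr \<Rightarrow> nat \<Rightarrow> bool" where
  "wf_expr nx nu (LeafX P) n \<longleftrightarrow> is_bmat nx P \<and> length P = n"
| "wf_expr nx nu (LeafU Q) n \<longleftrightarrow> is_bmat nu Q \<and> length Q = n"
| "wf_expr nx nu (Const v) n \<longleftrightarrow> length v = n"
| "wf_expr nx nu (XOR a b) n \<longleftrightarrow> wf_expr nx nu a n \<and> wf_expr nx nu b n"
| "wf_expr nx nu (XNOR a b) n \<longleftrightarrow> wf_expr nx nu a n \<and> wf_expr nx nu b n"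
| "wf_expr nx nu (NOT a) n \<longleftrightarrow> wf_expr nx nu a n"
| "wf_expr nx nu (AND a b) n \<longleftrightarrow> wf_expr nx nu a n \<and> wf_expr nx nu b n"
| "wf_expr nx nu (NAND a b) n \<longleftrightarrow> wf_expr nx nu a n \<and> wf_expr nx nu b n"
| "wf_expr nx nu (OR a b) n \<longleftrightarrow> wf_expr nx nu a n \<and> wf_expr nx nu b n"
| "wf_expr nx nu (NOR a b) n \<longleftrightarrow> wf_expr nx nu a n \<and> wf_expr nx nu b n"

fun eval :: "bexpr \<Rightarrow> bvec \<Rightarrow> bvec \<Rightarrow> bvec" where
  "eval (LeafX P) x u = mat_vec P x"
| "eval (LeafU Q) x u = mat_vec Q u"
| "eval (Const v) x u = v"
| "eval (XOR a b) x u = vxor (eval a x u) (eval b x u)"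
| "eval (XNOR a b) x u = vnot (vxor (eval a x u) (eval b x u))"
| "eval (NOT a) x u = vnot (eval a x u)"
| "eval (AND a b) x u = vand (eval a x u) (eval b x u)"
| "eval (NAND a b) x u = vnot (vand (eval a x u) (eval b x u))"
| "eval (OR a b) x u = vor (eval a x u) (eval b x u)"
| "eval (NOR a b) x u = vnot (vor (eval a x u) (eval b x u))"

definition lz_xor :: "lzono \<Rightarrow> lzono \<Rightarrow> lzono" where
  "lz_xor L1 L2 = (vxor (fst L1) (fst L2), snd L1 @ snd L2)"

definition lz_not :: "lzono \<Rightarrow> lzono" where
  "lz_not L = (vxor (fst L) (ones (length (fst L))), snd L)"

definition lz_and :: "lzono \<Rightarrow> lzono \<Rightarrow> lzono" where
  "lz_and L1 L2 = (case L1 of (c1, G1) \<Rightarrow> case L2 of (c2, G2) \<Rightarrow>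
     (vand c1 c2,
      map (vand c1) G2 @ map (vand c2) G1 @ [vand g1 g2. g1 \<leftarrow> G1, g2 \<leftarrow> G2]))"

definition lz_xnor :: "lzono \<Rightarrow> lzono \<Rightarrow> lzono" where
  "lz_xnor L1 L2 = lz_not (lz_xor L1 L2)"

definition lz_nand :: "lzono \<Rightarrow> lzono \<Rightarrow> lzono" where
  "lz_nand L1 L2 = lz_not (lz_and L1 L2)"

definition lz_or :: "lzono \<Rightarrow> lzono \<Rightarrow> lzono" where
  "lz_or L1 L2 = lz_nand (lz_not L1) (lz_not L2)"

definition lz_nor :: "lzono \<Rightarrow> lzono \<Rightarrow> lzono" where
  "lz_nor L1 L2 = lz_not (lz_or L1 L2)"

definition lz_matmul :: "bmat \<Rightarrow> lzono \<Rightarrow> lzono" where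
  "lz_matmul P L = (mat_vec P (fst L), map (mat_vec P) (snd L))"

fun zeval :: "bexpr \<Rightarrow> lzono \<Rightarrow> lzono \<Rightarrow> lzono" where
  "zeval (LeafX P) X U = lz_matmul P X"
| "zeval (LeafU Q) X U = lz_matmul Q U"
| "zeval (Const v) X U = (v, [])"
| "zeval (XOR a b) X U = lz_xor (zeval a X U) (zeval b X U)"
| "zeval (XNOR a b) X U = lz_xnor (zeval a X U) (zeval b X U)"
| "zeval (NOT a) X U = lz_not (zeval a X U)"
| "zeval (AND a b) X U = lz_and (zeval a X U) (zeval b X U)"
| "zeval (NAND a b) X U = lz_nand (zeval a X U) (zeval b X U)"
| "zeval (OR a b) X U = lz_or (zeval a X U) (zeval b X U)"
| "zeval (NOR a b) X U = lz_nor (zeval a X U) (zeval b X U)"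

fun reach_hat :: "bexpr \<Rightarrow> lzono \<Rightarrow> (nat \<Rightarrow> lzono) \<Rightarrow> nat \<Rightarrow> lzono" where
  "reach_hat f R0 U 0 = R0"
| "reach_hat f R0 U (Suc k) = zeval f (reach_hat f R0 U k) (U k)"

definition reach_exact :: "bexpr \<Rightarrow> bvec set \<Rightarrow> (nat \<Rightarrow> bvec set) \<Rightarrow> nat \<Rightarrow> bvec set" where
  "reach_exact f X0 Us N =
     {x N | x u. x 0 \<in> X0 \<and> (\<forall>k<N. u k \<in> Us k \<and> x (Suc k) = eval f (x k) (u k))}"

end

theory Submission
  imports Defs
begin

text \<open>A point of \<open>\<langle>c, G\<rangle>\<close> is selected by a bit vector \<open>\<beta>\<close>, and its \<open>i\<close>-th entry is
  \<open>c\<^sub>i\<close> XOR the parity of the \<open>i\<close>-th entries of the selected generators. Each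
  zonotope operation maps such representations of its arguments to one of the result: XOR
  concatenates the selections, NOT only flips the centre, matrix leaves are GF(2)-linear,
  and AND expands \<open>(c\<^sub>1 \<oplus> s\<^sub>1)(c\<^sub>2 \<oplus> s\<^sub>2) = c\<^sub>1c\<^sub>2 \<oplus> c\<^sub>1s\<^sub>2 \<oplus> c\<^sub>2s\<^sub>1 \<oplus> s\<^sub>1s\<^sub>2\<close>, where \<open>s\<^sub>1s\<^sub>2\<close> is the
  parity of the pairwise products of generators selected by \<open>b\<^sub>1 \<and> b\<^sub>2\<close>. Hence
  \<open>f(x, u) \<in> f(\<X>, \<U>)\<close> whenever \<open>x \<in> \<X>\<close> and \<open>u \<in> \<U>\<close>, and the theorem follows by
  induction on the time step.\<close>

fun parity :: "bool list \<Rightarrow> bool" where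
  "parity [] = False"
| "parity (a # xs) = (a \<noteq> parity xs)"

lemma parity_append [simp]: "parity (xs @ ys) = (parity xs \<noteq> parity ys)"
  by (induction xs) auto

lemma foldl_xor_eq_parity: "foldl (\<noteq>) a xs = (a \<noteq> parity xs)"
  by (induction xs arbitrary: a) auto

lemma length_vxor [simp]: "length (vxor a b) = min (length a) (length b)"
  by (simp add: vxor_def)

lemma nth_vxor [simp]: "i < length a \<Longrightarrow> i < length b \<Longrightarrow> vxor a b ! i = (a ! i \<noteq> b ! i)"
  by (simp add: vxor_def)

lemma vxor_Nil: "vxor [] b = []"
  by (simp add: vxor_def)

lemma vxor_Cons: "vxor (a # as) (b # bs) = (a \<noteq> b) # vxor as bs"
  by (simp add: vxor_def)

lemma vxor_ones: "vxor c (ones (length c)) = vnot c"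
  by (induction c) (simp_all add: vxor_def ones_def vnot_def)

lemma length_vand [simp]: "length (vand a b) = min (length a) (length b)"
  by (simp add: vand_def)

lemma nth_vand [simp]: "i < length a \<Longrightarrow> i < length b \<Longrightarrow> vand a b ! i = (a ! i \<and> b ! i)"
  by (simp add: vand_def)

lemma vor_eq_vnot_vand_vnot: "vor x y = vnot (vand (vnot x) (vnot y))"
  by (induction x arbitrary: y) (auto simp: vor_def vnot_def vand_def zip_Cons1 split: list.splits)

definition lz_point :: "bvec \<Rightarrow> bvec list \<Rightarrow> bool list \<Rightarrow> bvec" where
  "lz_point c G \<beta> = foldl (\<lambda>acc (g, b). if b then vxor acc g else acc) c (zip G \<beta>)"

definition selected_xor :: "bvec list \<Rightarrow> bool list \<Rightarrow> nat \<Rightarrow> bool" where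
  "selected_xor G \<beta> i = parity (map2 (\<lambda>g b. b \<and> g ! i) G \<beta>)"

lemma lz_set_eq: "lz_set (c, G) = {lz_point c G \<beta> | \<beta>. length \<beta> = length G}"
  by (simp add: lz_set_def lz_point_def)

lemma lz_set_no_generators: "lz_set (c, []) = {c}"
  by (simp add: lz_set_eq lz_point_def)

lemma length_lz_point:
  "\<forall>g\<in>set G. length g = length c \<Longrightarrow> length (lz_point c G \<beta>) = length c"
proof (induction G arbitrary: c \<beta>)
  case (Cons g G)
  then show ?case by (cases \<beta>) (auto simp: lz_point_def)
qed (simp add: lz_point_def)

lemma nth_lz_point:
  "\<forall>g\<in>set G. length g = length c \<Longrightarrow> i < length c \<Longrightarrow>
    lz_point c G \<beta> ! i = (c ! i \<noteq> selected_xor G \<beta> i)"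
proof (induction G arbitrary: c \<beta>)
  case (Cons g G)
  then show ?case by (cases \<beta>) (auto simp: lz_point_def selected_xor_def)
qed (simp add: lz_point_def selected_xor_def)

lemma mem_lz_set_iff:
  assumes "wf_lz n (c, G)"
  shows "x \<in> lz_set (c, G) \<longleftrightarrow> length x = n \<and>
    (\<exists>\<beta>. length \<beta> = length G \<and> (\<forall>i<n. x ! i = (c ! i \<noteq> selected_xor G \<beta> i)))"
proof -
  have lens: "length c = n" "\<forall>g\<in>set G. length g = length c"
    using assms by (auto simp: wf_lz_def)
  show ?thesis
  proof
    assume "x \<in> lz_set (c, G)"
    then obtain \<beta> where "length \<beta> = length G" "x = lz_point c G \<beta>"
      by (auto simp: lz_set_eq)
    then show "length x = n \<and> (\<exists>\<beta>. length \<beta> = length G \<and>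
        (\<forall>i<n. x ! i = (c ! i \<noteq> selected_xor G \<beta> i)))"
      using lens length_lz_point nth_lz_point by metis
  next
    assume "length x = n \<and> (\<exists>\<beta>. length \<beta> = length G \<and>
        (\<forall>i<n. x ! i = (c ! i \<noteq> selected_xor G \<beta> i)))"
    then obtain \<beta> where "length x = n" "length \<beta> = length G"
      "\<forall>i<n. x ! i = (c ! i \<noteq> selected_xor G \<beta> i)" by blast
    moreover from this have "x = lz_point c G \<beta>"
      using lens by (intro nth_equalityI) (simp_all add: length_lz_point nth_lz_point)
    ultimately show "x \<in> lz_set (c, G)"
      by (auto simp: lz_set_eq)
  qed
qed

lemma selected_xor_append:
  "length \<beta>\<^sub>1 = length G\<^sub>1 \<Longrightarrow>
    selected_xor (G\<^sub>1 @ G\<^sub>2) (\<beta>\<^sub>1 @ \<beta>\<^sub>2) i = (selected_xor G\<^sub>1 \<beta>\<^sub>1 i \<noteq> selected_xor G\<^sub>2 \<beta>\<^sub>2 i)"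
  by (simp add: selected_xor_def)

lemma selected_xor_map_vand:
  "i < length c \<Longrightarrow> \<forall>g\<in>set G. i < length g \<Longrightarrow>
    selected_xor (map (vand c) G) \<beta> i = (c ! i \<and> selected_xor G \<beta> i)"
proof (induction G arbitrary: \<beta>)
  case (Cons g G)
  then show ?case by (cases \<beta>) (auto simp: selected_xor_def)
qed (simp add: selected_xor_def)

lemma selected_xor_products:
  assumes "length \<beta>\<^sub>1 = length G\<^sub>1" "length \<beta>\<^sub>2 = length G\<^sub>2"
    and "\<forall>g\<in>set G\<^sub>1. i < length g" "\<forall>g\<in>set G\<^sub>2. i < length g"
  shows "selected_xor [vand g\<^sub>1 g\<^sub>2. g\<^sub>1 \<leftarrow> G\<^sub>1, g\<^sub>2 \<leftarrow> G\<^sub>2] [b\<^sub>1 \<and> b\<^sub>2. b\<^sub>1 \<leftarrow> \<beta>\<^sub>1, b\<^sub>2 \<leftarrow> \<beta>\<^sub>2] i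
    = (selected_xor G\<^sub>1 \<beta>\<^sub>1 i \<and> selected_xor G\<^sub>2 \<beta>\<^sub>2 i)"
  using assms
proof (induction \<beta>\<^sub>1 G\<^sub>1 rule: list_induct2)
  case (Cons b\<^sub>1 \<beta>\<^sub>1 g\<^sub>1 G\<^sub>1)
  have "selected_xor (map (vand g\<^sub>1) G\<^sub>2) (map ((\<and>) b\<^sub>1) \<beta>\<^sub>2) i
      = (b\<^sub>1 \<and> g\<^sub>1 ! i \<and> selected_xor G\<^sub>2 \<beta>\<^sub>2 i)"
    using Cons.prems \<open>length \<beta>\<^sub>2 = length G\<^sub>2\<close>
    by (induction \<beta>\<^sub>2 G\<^sub>2 rule: list_induct2) (auto simp: selected_xor_def)
  then show ?case
    using Cons by (auto simp: selected_xor_def)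
qed (simp add: selected_xor_def)

lemma wf_lz_lz_not: "wf_lz n Z \<Longrightarrow> wf_lz n (lz_not Z)"
  by (simp add: wf_lz_def lz_not_def ones_def)

lemma wf_lz_lz_xor: "wf_lz n Z\<^sub>1 \<Longrightarrow> wf_lz n Z\<^sub>2 \<Longrightarrow> wf_lz n (lz_xor Z\<^sub>1 Z\<^sub>2)"
  by (auto simp: wf_lz_def lz_xor_def)

lemma wf_lz_lz_and: "wf_lz n Z\<^sub>1 \<Longrightarrow> wf_lz n Z\<^sub>2 \<Longrightarrow> wf_lz n (lz_and Z\<^sub>1 Z\<^sub>2)"
  by (auto simp: wf_lz_def lz_and_def split: prod.splits)

lemma wf_lz_lz_matmul: "wf_lz (length P) (lz_matmul P Z)"
  by (simp add: wf_lz_def lz_matmul_def mat_vec_def)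

lemma vnot_mem_lz_not:
  assumes "wf_lz n Z" "x \<in> lz_set Z"
  shows "vnot x \<in> lz_set (lz_not Z)"
proof -
  obtain c G where Z: "Z = (c, G)" by fastforce
  have not_Z: "lz_not Z = (vnot c, G)" "wf_lz n (vnot c, G)"
    using assms(1) by (auto simp: Z lz_not_def vxor_ones wf_lz_def vnot_def)
  obtain \<beta> where "length \<beta> = length G" "\<forall>i<n. x ! i = (c ! i \<noteq> selected_xor G \<beta> i)"
    and "length x = n" "length c = n"
    using assms mem_lz_set_iff[of n c G x] by (auto simp: Z wf_lz_def)
  then show ?thesis
    unfolding not_Z(1) mem_lz_set_iff[OF not_Z(2)] by (auto simp: vnot_def)
qed

lemma vxor_mem_lz_xor:
  assumes wf: "wf_lz n Z\<^sub>1" "wf_lz n Z\<^sub>2" and mem: "x \<in> lz_set Z\<^sub>1" "y \<in> lz_set Z\<^sub>2"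
  shows "vxor x y \<in> lz_set (lz_xor Z\<^sub>1 Z\<^sub>2)"
proof -
  obtain c\<^sub>1 G\<^sub>1 c\<^sub>2 G\<^sub>2 where Z: "Z\<^sub>1 = (c\<^sub>1, G\<^sub>1)" "Z\<^sub>2 = (c\<^sub>2, G\<^sub>2)" by fastforce
  obtain \<beta>\<^sub>1 where \<beta>\<^sub>1: "length \<beta>\<^sub>1 = length G\<^sub>1" "\<forall>i<n. x ! i = (c\<^sub>1 ! i \<noteq> selected_xor G\<^sub>1 \<beta>\<^sub>1 i)"
    and "length x = n"
    using mem(1) mem_lz_set_iff[OF wf(1)[unfolded Z]] by (auto simp: Z)
  obtain \<beta>\<^sub>2 where \<beta>\<^sub>2: "length \<beta>\<^sub>2 = length G\<^sub>2" "\<forall>i<n. y ! i = (c\<^sub>2 ! i \<noteq> selected_xor G\<^sub>2 \<beta>\<^sub>2 i)"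
    and "length y = n"
    using mem(2) mem_lz_set_iff[OF wf(2)[unfolded Z]] by (auto simp: Z)
  have "length c\<^sub>1 = n" "length c\<^sub>2 = n"
    using wf by (simp_all add: Z wf_lz_def)
  moreover have "wf_lz n (vxor c\<^sub>1 c\<^sub>2, G\<^sub>1 @ G\<^sub>2)"
    using wf_lz_lz_xor[OF wf] by (simp add: Z lz_xor_def)
  ultimately show ?thesis
    unfolding Z lz_xor_def fst_conv snd_conv mem_lz_set_iff[OF \<open>wf_lz n (vxor c\<^sub>1 c\<^sub>2, G\<^sub>1 @ G\<^sub>2)\<close>]
    using \<beta>\<^sub>1 \<beta>\<^sub>2 \<open>length x = n\<close> \<open>length y = n\<close>
    by (intro conjI exI[of _ "\<beta>\<^sub>1 @ \<beta>\<^sub>2"]) (auto simp: selected_xor_append)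
qed

lemma vand_mem_lz_and:
  assumes wf: "wf_lz n Z\<^sub>1" "wf_lz n Z\<^sub>2" and mem: "x \<in> lz_set Z\<^sub>1" "y \<in> lz_set Z\<^sub>2"
  shows "vand x y \<in> lz_set (lz_and Z\<^sub>1 Z\<^sub>2)"
proof -
  obtain c\<^sub>1 G\<^sub>1 c\<^sub>2 G\<^sub>2 where Z: "Z\<^sub>1 = (c\<^sub>1, G\<^sub>1)" "Z\<^sub>2 = (c\<^sub>2, G\<^sub>2)" by fastforce
  obtain \<beta>\<^sub>1 where \<beta>\<^sub>1: "length \<beta>\<^sub>1 = length G\<^sub>1" "\<forall>i<n. x ! i = (c\<^sub>1 ! i \<noteq> selected_xor G\<^sub>1 \<beta>\<^sub>1 i)"
    and "length x = n"
    using mem(1) mem_lz_set_iff[OF wf(1)[unfolded Z]] by (auto simp: Z)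
  obtain \<beta>\<^sub>2 where \<beta>\<^sub>2: "length \<beta>\<^sub>2 = length G\<^sub>2" "\<forall>i<n. y ! i = (c\<^sub>2 ! i \<noteq> selected_xor G\<^sub>2 \<beta>\<^sub>2 i)"
    and "length y = n"
    using mem(2) mem_lz_set_iff[OF wf(2)[unfolded Z]] by (auto simp: Z)
  have lens: "length c\<^sub>1 = n" "length c\<^sub>2 = n" "\<forall>g\<in>set G\<^sub>1. length g = n" "\<forall>g\<in>set G\<^sub>2. length g = n"
    using wf by (simp_all add: Z wf_lz_def)
  define G where "G = map (vand c\<^sub>1) G\<^sub>2 @ map (vand c\<^sub>2) G\<^sub>1 @ [vand g\<^sub>1 g\<^sub>2. g\<^sub>1 \<leftarrow> G\<^sub>1, g\<^sub>2 \<leftarrow> G\<^sub>2]"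
  define \<beta> where "\<beta> = \<beta>\<^sub>2 @ \<beta>\<^sub>1 @ [b\<^sub>1 \<and> b\<^sub>2. b\<^sub>1 \<leftarrow> \<beta>\<^sub>1, b\<^sub>2 \<leftarrow> \<beta>\<^sub>2]"
  have and_Z: "lz_and Z\<^sub>1 Z\<^sub>2 = (vand c\<^sub>1 c\<^sub>2, G)"
    by (simp add: Z lz_and_def G_def)
  have "length \<beta> = length G"
    using \<beta>\<^sub>1(1) \<beta>\<^sub>2(1) by (simp add: \<beta>_def G_def length_concat comp_def sum_list_triv)
  moreover have "selected_xor G \<beta> i = ((c\<^sub>1 ! i \<and> selected_xor G\<^sub>2 \<beta>\<^sub>2 i) \<noteq>
      ((c\<^sub>2 ! i \<and> selected_xor G\<^sub>1 \<beta>\<^sub>1 i) \<noteq> (selected_xor G\<^sub>1 \<beta>\<^sub>1 i \<and> selected_xor G\<^sub>2 \<beta>\<^sub>2 i)))"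
    if "i < n" for i
    using that lens \<beta>\<^sub>1(1) \<beta>\<^sub>2(1)
    by (simp add: G_def \<beta>_def selected_xor_append selected_xor_map_vand selected_xor_products)
  moreover have "wf_lz n (vand c\<^sub>1 c\<^sub>2, G)"
    using wf_lz_lz_and[OF wf] by (simp add: and_Z)
  ultimately show ?thesis
    unfolding and_Z mem_lz_set_iff[OF \<open>wf_lz n (vand c\<^sub>1 c\<^sub>2, G)\<close>]
    using \<beta>\<^sub>1 \<beta>\<^sub>2 lens \<open>length x = n\<close> \<open>length y = n\<close>
    by (intro conjI exI[of _ \<beta>]) auto
qed

lemma parity_map2_and_vxor:
  "length a = length b \<Longrightarrow>
    parity (map2 (\<and>) r (vxor a b)) = (parity (map2 (\<and>) r a) \<noteq> parity (map2 (\<and>) r b))"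
proof (induction r arbitrary: a b)
  case (Cons x r)
  then show ?case by (cases a; cases b) (auto simp: vxor_def)
qed simp

lemma mat_vec_vxor:
  "length a = length b \<Longrightarrow> mat_vec P (vxor a b) = vxor (mat_vec P a) (mat_vec P b)"
  unfolding mat_vec_def foldl_xor_eq_parity
  by (induction P) (simp_all add: parity_map2_and_vxor vxor_Nil vxor_Cons)

lemma mat_vec_lz_point:
  "\<forall>g\<in>set G. length g = length c \<Longrightarrow>
    mat_vec P (lz_point c G \<beta>) = lz_point (mat_vec P c) (map (mat_vec P) G) \<beta>"
proof (induction G arbitrary: c \<beta>)
  case (Cons g G)
  then show ?case by (cases \<beta>) (auto simp: lz_point_def mat_vec_vxor)
qed (simp add: lz_point_def)

lemma mat_vec_mem_lz_matmul:
  assumes "wf_lz n Z" "x \<in> lz_set Z"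
  shows "mat_vec P x \<in> lz_set (lz_matmul P Z)"
proof -
  obtain c G where Z: "Z = (c, G)" by fastforce
  obtain \<beta> where "length \<beta> = length G" "x = lz_point c G \<beta>"
    using assms(2) by (auto simp: Z lz_set_eq)
  moreover have "\<forall>g\<in>set G. length g = length c"
    using assms(1) by (simp add: Z wf_lz_def)
  ultimately show ?thesis
    by (auto simp: Z lz_matmul_def lz_set_eq mat_vec_lz_point)
qed

lemma wf_lz_zeval:
  "wf_expr nx nu e n \<Longrightarrow> wf_lz nx X \<Longrightarrow> wf_lz nu U \<Longrightarrow> wf_lz n (zeval e X U)"
  by (induction e arbitrary: n)
    (auto simp: wf_lz_lz_matmul wf_lz_def[of _ "(_, [])"] lz_xnor_def lz_nand_def lz_or_def lz_nor_def
      intro!: wf_lz_lz_not wf_lz_lz_xor wf_lz_lz_and)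

lemma eval_mem_zeval:
  assumes "wf_lz nx X" "wf_lz nu U" "x \<in> lz_set X" "u \<in> lz_set U"
  shows "wf_expr nx nu e n \<Longrightarrow> eval e x u \<in> lz_set (zeval e X U)"
  by (induction e arbitrary: n)
    (use assms in \<open>auto simp: lz_set_no_generators lz_xnor_def lz_nand_def lz_or_def lz_nor_def
      vor_eq_vnot_vand_vnot intro!: mat_vec_mem_lz_matmul vnot_mem_lz_not vxor_mem_lz_xor
      vand_mem_lz_and wf_lz_lz_not wf_lz_lz_xor wf_lz_lz_and wf_lz_zeval[OF _ assms(1,2)]\<close>)

lemma wf_lz_reach_hat:
  "wf_expr nx nu f nx \<Longrightarrow> wf_lz nx R0 \<Longrightarrow> \<forall>k. wf_lz nu (U k) \<Longrightarrow>
    wf_lz nx (reach_hat f R0 U k)"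
  by (induction k) (simp_all add: wf_lz_zeval)

theorem theorem1:
  fixes nx nu :: nat and f :: bexpr and X0 :: "bvec set"
    and R0 :: lzono and U :: "nat \<Rightarrow> lzono" and N :: nat
  assumes f_wf: "wf_expr nx nu f nx"
    and X0_dim: "\<forall>x\<in>X0. length x = nx"
    and R0_wf: "wf_lz nx R0"
    and X0_sub: "X0 \<subseteq> lz_set R0"
    and U_wf: "\<forall>k. wf_lz nu (U k)"
  shows "reach_exact f X0 (\<lambda>k. lz_set (U k)) N \<subseteq> lz_set (reach_hat f R0 U N)"
proof
  fix y assume "y \<in> reach_exact f X0 (\<lambda>k. lz_set (U k)) N"
  then obtain x u where y: "y = x N" and "x 0 \<in> X0"
    and step: "\<forall>k<N. u k \<in> lz_set (U k) \<and> x (Suc k) = eval f (x k) (u k)"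
    unfolding reach_exact_def by auto
  have "x k \<in> lz_set (reach_hat f R0 U k)" if "k \<le> N" for k
    using that
  proof (induction k)
    case 0
    show ?case using \<open>x 0 \<in> X0\<close> X0_sub by auto
  next
    case (Suc k)
    then show ?case
      using step eval_mem_zeval[OF wf_lz_reach_hat[OF f_wf R0_wf U_wf] U_wf[rule_format] _ _ f_wf]
      by simp
  qed
  then show "y \<in> lz_set (reach_hat f R0 U N)"
    using y by simp
qed

end
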